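(* Let $M$ be a multiplier on $\mathscr{A}(\mathbb{R})$ with multiplier sequence $(m_n)_{n\in\mathbb{N}}$. If $M$ is the generator of a $C_0$-semigroup $(T_t)_{t\geq 0}$ on $\mathscr{A}(\mathbb{R})$, then every $T_t$ is a multiplier, and for every $t\geq 0$ the multiplier sequence of $T_t$ is $(\exp(tm_n))_{n\in\mathbb{N}}$.
   Context: $\mathscr{A}(\mathbb{R})$ denotes the space of real analytic functions on $\mathbb{R}$ with its natural inductive limit topology $\mathscr{A}(\mathbb{R})=\operatorname{ind}_{U\supset\mathbb{R}}H(U)$, where $U$ runs over complex open neighbourhoods of $\mathbb{R}$ and $H(U)$ carries the compact-open topology. A continuous linear operator $M:\mathscr{A}(\mathbb{R})\to\mathscr{A}(\mathbb{R})$ is a multiplier if $M(x^n)=m_nx^n$ for all $n\in\mathbb{N}$; $(m_n)$ is its multiplier sequence. A $C_0$-semigroup is a family $(T_t)_{t\ge0}$ of continuous linear operators with $T_tT_s=T_{t+s}$, $T_0=I$, and $t\mapsto T_tf$ continuous for each $f$; its generator is $Af=\lim_{t\to0^+}(T_tf-f)/t$ on the domain where this limit exists. "$M$ generates the semigroup" means $M$ is its generator. *)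

theory Defs
  imports "HOL-Analysis.Analysis"
begin

text \<open>Complex-valued real analytic functions on the real line: restrictions to the real
  axis of functions holomorphic on some open complex neighbourhood of the real axis.\<close>
definition AR :: "(real \<Rightarrow> complex) set" where
  "AR = {f. \<exists>U g. open U \<and> range complex_of_real \<subseteq> U \<and> g holomorphic_on U
                 \<and> (\<forall>x. g (complex_of_real x) = f x)}"

text \<open>Continuous seminorms of the locally convex inductive limit topology
  ind_{U} H(U): seminorms p on AR such that for every open U containing the real axis,
  p composed with the restriction map H(U) -> AR is continuous for the compact-open
  topology, i.e. dominated by a constant times the sup norm on a compact subset of U.\<close>
definition AR_cont_seminorm :: "((real \<Rightarrow> complex) \<Rightarrow> real) \<Rightarrow> bool" where
  "AR_cont_seminorm p \<longleftrightarrow>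
     (\<forall>f\<in>AR. 0 \<le> p f) \<and>
     (\<forall>f\<in>AR. \<forall>g\<in>AR. p (\<lambda>x. f x + g x) \<le> p f + p g) \<and>
     (\<forall>c::complex. \<forall>f\<in>AR. p (\<lambda>x. c * f x) = norm c * p f) \<and>
     (\<forall>U. open U \<and> range complex_of_real \<subseteq> U \<longrightarrow>
        (\<exists>K C. compact K \<and> K \<noteq> {} \<and> K \<subseteq> U \<and>
           (\<forall>g. g holomorphic_on U \<longrightarrow>
                p (\<lambda>x. g (complex_of_real x)) \<le> C * (SUP z\<in>K. norm (g z)))))"

definition AR_tendsto :: "('a \<Rightarrow> real \<Rightarrow> complex) \<Rightarrow> (real \<Rightarrow> complex) \<Rightarrow> 'a filter \<Rightarrow> bool" where
  "AR_tendsto F l net \<longleftrightarrow>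
     (\<forall>p. AR_cont_seminorm p \<longrightarrow> ((\<lambda>t. p (\<lambda>x. F t x - l x)) \<longlongrightarrow> 0) net)"

definition AR_operator :: "((real \<Rightarrow> complex) \<Rightarrow> (real \<Rightarrow> complex)) \<Rightarrow> bool" where
  "AR_operator T \<longleftrightarrow>
     (\<forall>f\<in>AR. T f \<in> AR) \<and>
     (\<forall>f\<in>AR. \<forall>g\<in>AR. T (\<lambda>x. f x + g x) = (\<lambda>x. T f x + T g x)) \<and>
     (\<forall>c::complex. \<forall>f\<in>AR. T (\<lambda>x. c * f x) = (\<lambda>x. c * T f x)) \<and>
     (\<forall>q. AR_cont_seminorm q \<longrightarrow> AR_cont_seminorm (\<lambda>f. q (T f)))"

definition is_multiplier ::
  "((real \<Rightarrow> complex) \<Rightarrow> (real \<Rightarrow> complex)) \<Rightarrow> (nat \<Rightarrow> complex) \<Rightarrow> bool" where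
  "is_multiplier M m \<longleftrightarrow> AR_operator M \<and>
     (\<forall>n. M (\<lambda>x. (complex_of_real x) ^ n) = (\<lambda>x. m n * (complex_of_real x) ^ n))"

definition C0_semigroup ::
  "(real \<Rightarrow> (real \<Rightarrow> complex) \<Rightarrow> (real \<Rightarrow> complex)) \<Rightarrow> bool" where
  "C0_semigroup T \<longleftrightarrow>
     (\<forall>t\<ge>0. AR_operator (T t)) \<and>
     (\<forall>t s f. t \<ge> 0 \<longrightarrow> s \<ge> 0 \<longrightarrow> f \<in> AR \<longrightarrow> T t (T s f) = T (t + s) f) \<and>
     (\<forall>f\<in>AR. T 0 f = f) \<and>
     (\<forall>f\<in>AR. \<forall>s\<ge>0. AR_tendsto (\<lambda>t. T t f) (T s f) (at s within {0..}))"

text \<open>M is the generator of T: the difference quotients converge for every f in AR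
  (so the domain of the generator is all of AR) and the limit is M f.\<close>
definition generates ::
  "((real \<Rightarrow> complex) \<Rightarrow> (real \<Rightarrow> complex)) \<Rightarrow>
   (real \<Rightarrow> (real \<Rightarrow> complex) \<Rightarrow> (real \<Rightarrow> complex)) \<Rightarrow> bool" where
  "generates M T \<longleftrightarrow>
     (\<forall>f\<in>AR. AR_tendsto (\<lambda>t. \<lambda>x. (T t f x - f x) / complex_of_real t) (M f) (at_right 0))"

end

theory Submission
  imports Defs
begin

text \<open>Fix a monomial \<open>f = x\<^sup>n\<close>, an eigenvector of the generator: \<open>M f = m\<^sub>n f\<close>.
  Evaluating at a point \<open>x\<close> is a continuous seminorm, so \<open>u(s) = (T\<^sub>s f)(x)\<close> is continuous
  on \<open>[0,\<infinity>)\<close>, and by the semigroup law its right difference quotients at \<open>s\<close> are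
  \<open>T\<^sub>s\<close> applied to those of \<open>f\<close> at \<open>0\<close>; continuity of \<open>T\<^sub>s\<close> turns their limit into
  \<open>(T\<^sub>s M f)(x) = m\<^sub>n u(s)\<close>. Hence \<open>v(s) = exp(-s m\<^sub>n) u(s)\<close> is continuous with vanishing
  right derivative everywhere, and a Dini-type argument shows that such a function is
  constant. So \<open>u(t) = exp(t m\<^sub>n) u(0) = exp(t m\<^sub>n) x\<^sup>n\<close>.\<close>

lemma AR_add: "f \<in> AR \<Longrightarrow> g \<in> AR \<Longrightarrow> (\<lambda>x. f x + g x) \<in> AR"
proof -
  assume "f \<in> AR" "g \<in> AR"
  then obtain U1 g1 U2 g2 where 1: "open U1" "range complex_of_real \<subseteq> U1" "g1 holomorphic_on U1"
      "\<forall>x. g1 (complex_of_real x) = f x"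
    and 2: "open U2" "range complex_of_real \<subseteq> U2" "g2 holomorphic_on U2"
      "\<forall>x. g2 (complex_of_real x) = g x"
    unfolding AR_def by blast
  show ?thesis unfolding AR_def
    apply (rule CollectI, rule exI[of _ "U1 \<inter> U2"], rule exI[of _ "\<lambda>z. g1 z + g2 z"])
    using 1 2 by (auto intro!: holomorphic_intros elim: holomorphic_on_subset)
qed

lemma AR_scale: "f \<in> AR \<Longrightarrow> (\<lambda>x. c * f x) \<in> AR"
proof -
  assume "f \<in> AR"
  then obtain U g where "open U" "range complex_of_real \<subseteq> U" "g holomorphic_on U"
      "\<forall>x. g (complex_of_real x) = f x"
    unfolding AR_def by blast
  then show ?thesis unfolding AR_def
    by (intro CollectI exI[of _ U] exI[of _ "\<lambda>z. c * g z"]) (auto intro!: holomorphic_intros)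
qed

lemma AR_diff: "f \<in> AR \<Longrightarrow> g \<in> AR \<Longrightarrow> (\<lambda>x. f x - g x) \<in> AR"
  using AR_add[of f "\<lambda>x. (-1) * g x"] AR_scale[of g "-1"] by simp

lemma AR_divide: "f \<in> AR \<Longrightarrow> (\<lambda>x. f x / c) \<in> AR"
  using AR_scale[of f "inverse c"] by (simp add: divide_inverse_commute)

lemma AR_monomial: "(\<lambda>x. complex_of_real x ^ n) \<in> AR"
  unfolding AR_def
  by (intro CollectI exI[of _ UNIV] exI[of _ "\<lambda>z. z ^ n"]) (auto intro!: holomorphic_intros)

lemma AR_operator_in_AR: "AR_operator S \<Longrightarrow> f \<in> AR \<Longrightarrow> S f \<in> AR"
  unfolding AR_operator_def by blast

lemma AR_operator_scale: "AR_operator S \<Longrightarrow> f \<in> AR \<Longrightarrow> S (\<lambda>x. c * f x) = (\<lambda>x. c * S f x)"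
  unfolding AR_operator_def by blast

lemma AR_operator_divide: "AR_operator S \<Longrightarrow> f \<in> AR \<Longrightarrow> S (\<lambda>x. f x / c) = (\<lambda>x. S f x / c)"
  using AR_operator_scale[of S f "inverse c"] by (simp add: divide_inverse_commute)

lemma AR_operator_diff:
  assumes S: "AR_operator S" and "f \<in> AR" "g \<in> AR"
  shows "S (\<lambda>x. f x - g x) = (\<lambda>x. S f x - S g x)"
proof -
  have additive: "\<forall>f\<in>AR. \<forall>g\<in>AR. S (\<lambda>x. f x + g x) = (\<lambda>x. S f x + S g x)"
    using S unfolding AR_operator_def by blast
  have "(\<lambda>x. (-1) * g x) \<in> AR" using \<open>g \<in> AR\<close> by (rule AR_scale)
  then have "S (\<lambda>x. f x + (-1) * g x) = (\<lambda>x. S f x + S (\<lambda>x. (-1) * g x) x)"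
    using additive \<open>f \<in> AR\<close> by (meson bspec)
  then show ?thesis using AR_operator_scale[OF S \<open>g \<in> AR\<close>, of "-1"] by simp
qed

lemma AR_cont_seminorm_eval: "AR_cont_seminorm (\<lambda>f. norm (f x))"
  unfolding AR_cont_seminorm_def
proof (intro conjI allI impI ballI)
  fix U :: "complex set" assume "open U \<and> range complex_of_real \<subseteq> U"
  then show "\<exists>K C. compact K \<and> K \<noteq> {} \<and> K \<subseteq> U \<and>
           (\<forall>g. g holomorphic_on U \<longrightarrow> norm (g (complex_of_real x)) \<le> C * (SUP z\<in>K. norm (g z)))"
    by (intro exI[of _ "{complex_of_real x}"] exI[of _ 1]) auto
qed (auto simp: norm_mult norm_triangle_ineq)

lemma AR_tendsto_pointwise:
  assumes "AR_tendsto F l net"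
  shows "((\<lambda>t. F t x) \<longlongrightarrow> l x) net"
proof -
  have "((\<lambda>t. norm (F t x - l x)) \<longlongrightarrow> 0) net"
    using assms AR_cont_seminorm_eval[of x] unfolding AR_tendsto_def by auto
  then show ?thesis by (simp add: tendsto_norm_zero_iff LIM_zero_iff)
qed

lemma AR_operator_tendsto_pointwise:
  assumes S: "AR_operator S" and F: "AR_tendsto F l net"
    and ev: "eventually (\<lambda>t. F t \<in> AR) net" and l: "l \<in> AR"
  shows "((\<lambda>t. S (F t) x) \<longlongrightarrow> S l x) net"
proof -
  have "AR_cont_seminorm (\<lambda>g. norm (S g x))"
    using S AR_cont_seminorm_eval[of x] unfolding AR_operator_def by auto
  then have "((\<lambda>t. norm (S (\<lambda>y. F t y - l y) x)) \<longlongrightarrow> 0) net"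
    using F unfolding AR_tendsto_def by auto
  moreover have "eventually (\<lambda>t. norm (S (\<lambda>y. F t y - l y) x) = norm (S (F t) x - S l x)) net"
    using ev by eventually_elim (simp add: AR_operator_diff[OF S _ l])
  ultimately have "((\<lambda>t. norm (S (F t) x - S l x)) \<longlongrightarrow> 0) net"
    by (rule Lim_transform_eventually)
  then show ?thesis by (simp add: tendsto_norm_zero_iff LIM_zero_iff)
qed

text \<open>The first point \<open>a\<close> where \<open>\<parallel>v s - v 0\<parallel> \<le> e s + e\<close> fails would satisfy it by left
  continuity, and then also slightly to the right of \<open>a\<close>, because the right derivative
  vanishes there.\<close>
lemma right_deriv_zero_growth_bound:
  fixes v :: "real \<Rightarrow> 'a::real_normed_field"
  assumes cont: "\<And>s. s \<ge> 0 \<Longrightarrow> (v \<longlongrightarrow> v s) (at s within {0..})"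
    and der: "\<And>s. s \<ge> 0 \<Longrightarrow> ((\<lambda>h. (v (s+h) - v s) / of_real h) \<longlongrightarrow> 0) (at_right 0)"
    and "t \<ge> 0" "e > 0"
  shows "norm (v t - v 0) \<le> e * t + e"
proof (rule ccontr)
  assume nt: "\<not> ?thesis"
  define B where "B = {s. 0 \<le> s \<and> s \<le> t \<and> norm (v s - v 0) > e * s + e}"
  have tB: "t \<in> B" using nt \<open>t \<ge> 0\<close> unfolding B_def by auto
  have bdd: "bdd_below B" unfolding B_def bdd_below_def by auto
  define a where "a = Inf B"
  have a0: "a \<ge> 0" unfolding a_def using tB by (intro cInf_greatest) (auto simp: B_def)
  have below: "norm (v s - v 0) \<le> e * s + e" if "0 \<le> s" "s < a" for s
  proof (rule ccontr)
    assume "\<not> ?thesis"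
    then have "s \<in> B" using that cInf_lower[OF tB bdd] unfolding B_def a_def by auto
    then show False using that cInf_lower[OF _ bdd] unfolding a_def by fastforce
  qed
  have aok: "norm (v a - v 0) \<le> e * a + e"
  proof (cases "a = 0")
    case False
    then have apos: "a > 0" using a0 by simp
    have "(v \<longlongrightarrow> v a) (at a within {0..a})"
      using cont[OF a0] by (rule tendsto_within_subset) auto
    then have "(v \<longlongrightarrow> v a) (at_left a)"
      using apos by (simp add: at_within_Icc_at_left)
    then have "((\<lambda>s. norm (v s - v 0) - (e * s + e)) \<longlongrightarrow> norm (v a - v 0) - (e * a + e)) (at_left a)"
      by (intro tendsto_intros)
    moreover have "eventually (\<lambda>s. norm (v s - v 0) - (e * s + e) \<le> 0) (at_left a)"
      using eventually_at_left_real[OF apos] by eventually_elim (use below in auto)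
    ultimately have "norm (v a - v 0) - (e * a + e) \<le> 0"
      by (rule tendsto_upperbound) simp
    then show ?thesis by simp
  qed (use \<open>e > 0\<close> in simp)
  then have aB: "a \<notin> B" unfolding B_def by auto
  have "eventually (\<lambda>h. norm ((v (a+h) - v a) / of_real h) < e) (at_right 0)"
    using der[OF a0] \<open>e > 0\<close> by (auto simp: tendsto_iff dist_norm)
  then obtain d where d: "d > 0" "\<And>h. 0 < h \<Longrightarrow> h < d \<Longrightarrow> norm ((v (a+h) - v a) / of_real h) < e"
    by (auto simp: eventually_at_right_field)
  obtain c where c: "c \<in> B" "c < a + d"
    using cInf_lessD[of B "a + d"] tB d(1) unfolding a_def by auto
  have "a \<le> c" using cInf_lower[OF c(1) bdd] unfolding a_def .
  then have ac: "a < c" using aB c(1) by (metis order_le_less)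
  have "norm ((v c - v a) / of_real (c - a)) < e" using ac c d(2)[of "c - a"] by auto
  then have "norm (v c - v a) < e * (c - a)" using ac
    by (simp add: norm_divide divide_less_eq del: of_real_diff)
  then have "norm (v c - v 0) \<le> e * c + e"
    using aok norm_triangle_ineq[of "v c - v a" "v a - v 0"] by (simp add: algebra_simps)
  then show False using c(1) unfolding B_def by auto
qed

lemma right_deriv_zero_const:
  fixes v :: "real \<Rightarrow> 'a::real_normed_field"
  assumes cont: "\<And>s. s \<ge> 0 \<Longrightarrow> (v \<longlongrightarrow> v s) (at s within {0..})"
    and der: "\<And>s. s \<ge> 0 \<Longrightarrow> ((\<lambda>h. (v (s+h) - v s) / of_real h) \<longlongrightarrow> 0) (at_right 0)"
    and t: "t \<ge> 0"
  shows "v t = v 0"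
proof -
  have "norm (v t - v 0) \<le> 0"
  proof (rule field_le_epsilon)
    fix e :: real assume "e > 0"
    then have "norm (v t - v 0) \<le> (e/(t+1)) * t + e/(t+1)"
      using t by (intro right_deriv_zero_growth_bound[OF cont der]) auto
    also have "\<dots> = (e/(t+1)) * (t+1)" by (simp add: distrib_left)
    also have "\<dots> = e" using t by simp
    finally show "norm (v t - v 0) \<le> 0 + e" by simp
  qed
  then show ?thesis by simp
qed

lemma field_derivative_right_quotient:
  fixes f :: "complex \<Rightarrow> complex"
  assumes "(f has_field_derivative D) (at (complex_of_real s))"
  shows "((\<lambda>h. (f (complex_of_real (s+h)) - f (complex_of_real s)) / complex_of_real h)
           \<longlongrightarrow> D) (at_right 0)"
proof -
  have L: "((\<lambda>k. (f (complex_of_real s + k) - f (complex_of_real s)) / k) \<longlongrightarrow> D) (at 0)"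
    using assms unfolding DERIV_def by simp
  have "filterlim complex_of_real (at 0) (at_right (0::real))"
  proof (rule filterlim_atI)
    have "(complex_of_real \<longlongrightarrow> complex_of_real 0) (at_right (0::real))"
      by (intro tendsto_of_real tendsto_ident_at)
    then show "(complex_of_real \<longlongrightarrow> 0) (at_right 0)" by simp
    show "\<forall>\<^sub>F x in at_right 0. complex_of_real x \<noteq> 0"
      using eventually_at_right_less[of "0::real"] by eventually_elim simp
  qed
  from filterlim_compose[OF L this] show ?thesis by simp
qed

lemma right_deriv_linear_ode:
  fixes u :: "real \<Rightarrow> complex"
  assumes cont_u: "\<And>s. s \<ge> 0 \<Longrightarrow> (u \<longlongrightarrow> u s) (at s within {0..})"
    and der_u: "\<And>s. s \<ge> 0 \<Longrightarrow> ((\<lambda>h. (u (s+h) - u s) / complex_of_real h) \<longlongrightarrow> c * u s) (at_right 0)"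
    and t: "t \<ge> 0"
  shows "u t = exp (complex_of_real t * c) * u 0"
proof -
  define E where "E r = exp (-(complex_of_real r * c))" for r
  define v where "v r = E r * u r" for r
  have cont_v: "(v \<longlongrightarrow> v s) (at s within {0..})" if "s \<ge> 0" for s
    unfolding v_def E_def by (intro tendsto_intros cont_u that)
  have der_v: "((\<lambda>h. (v (s+h) - v s) / complex_of_real h) \<longlongrightarrow> 0) (at_right 0)"
    if s: "s \<ge> 0" for s
  proof -
    have product_rule: "(v (s+h) - v s) / complex_of_real h =
        E (s+h) * ((u (s+h) - u s) / complex_of_real h) + u s * ((E (s+h) - E s) / complex_of_real h)" for h
    proof -
      have "v (s+h) - v s = E (s+h) * (u (s+h) - u s) + u s * (E (s+h) - E s)"
        unfolding v_def by (simp add: algebra_simps)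
      then show ?thesis by (simp only: add_divide_distrib times_divide_eq_right)
    qed
    have "((\<lambda>h. E (s+h)) \<longlongrightarrow> E (s+0)) (at_right 0)"
      unfolding E_def by (intro tendsto_intros)
    moreover have "((\<lambda>h. (E (s+h) - E s) / complex_of_real h) \<longlongrightarrow> E s * (-c)) (at_right 0)"
      unfolding E_def
      by (rule field_derivative_right_quotient[where f = "\<lambda>z. exp (-(z * c))"])
         (auto intro!: derivative_eq_intros)
    ultimately have "((\<lambda>h. (v (s+h) - v s) / complex_of_real h)
        \<longlongrightarrow> E s * (c * u s) + u s * (E s * (-c))) (at_right 0)"
      unfolding product_rule by (intro tendsto_intros der_u s) auto
    then show ?thesis by (simp add: algebra_simps)
  qed
  have "E t * u t = u 0"
    using right_deriv_zero_const[OF cont_v der_v t] unfolding v_def E_def by simp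
  then show ?thesis
    unfolding E_def by (metis exp_minus_inverse mult.assoc mult_1_left)
qed

lemma C0_semigroup_orbit_right_derivative:
  assumes T: "C0_semigroup T" and gen: "generates M T" and M: "AR_operator M"
    and f: "f \<in> AR" and s: "s \<ge> 0"
  shows "((\<lambda>h. (T (s+h) f x - T s f x) / complex_of_real h) \<longlongrightarrow> T s (M f) x) (at_right 0)"
proof -
  have Ts: "AR_operator (T s)" and Th: "\<And>h. h \<ge> 0 \<Longrightarrow> AR_operator (T h)"
    and law: "\<And>h. h \<ge> 0 \<Longrightarrow> T s (T h f) = T (s+h) f"
    using T s f unfolding C0_semigroup_def by auto
  define D where "D h = (\<lambda>y. (T h f y - f y) / complex_of_real h)" for h
  have DAR: "D h \<in> AR" if "h \<ge> 0" for h
    unfolding D_def using that by (intro AR_divide AR_diff AR_operator_in_AR[OF Th] f)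
  have "((\<lambda>h. T s (D h) x) \<longlongrightarrow> T s (M f) x) (at_right 0)"
  proof (rule AR_operator_tendsto_pointwise[OF Ts])
    show "AR_tendsto D (M f) (at_right 0)" using gen f unfolding generates_def D_def by blast
    show "eventually (\<lambda>h. D h \<in> AR) (at_right 0)"
      using eventually_at_right_less[of "0::real"] by eventually_elim (simp add: DAR)
  qed (rule AR_operator_in_AR[OF M f])
  moreover have "eventually (\<lambda>h. T s (D h) x = (T (s+h) f x - T s f x) / complex_of_real h) (at_right 0)"
    using eventually_at_right_less[of "0::real"]
  proof eventually_elim
    case (elim h)
    then have "h > 0" by simp
    have "T s (D h) = (\<lambda>y. T s (\<lambda>y. T h f y - f y) y / complex_of_real h)"
      unfolding D_def using \<open>h > 0\<close> by (intro AR_operator_divide[OF Ts] AR_diff AR_operator_in_AR[OF Th] f) auto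
    also have "T s (\<lambda>y. T h f y - f y) = (\<lambda>y. T s (T h f) y - T s f y)"
      using \<open>h > 0\<close> by (intro AR_operator_diff[OF Ts] AR_operator_in_AR[OF Th] f) auto
    finally show ?case using law \<open>h > 0\<close> by simp
  qed
  ultimately show ?thesis by (rule Lim_transform_eventually)
qed

lemma C0_semigroup_eigenvector:
  assumes T: "C0_semigroup T" and gen: "generates M T" and M: "AR_operator M"
    and f: "f \<in> AR" and Mf: "M f = (\<lambda>x. c * f x)" and t: "t \<ge> 0"
  shows "T t f = (\<lambda>x. exp (complex_of_real t * c) * f x)"
proof
  fix x
  have "T t f x = exp (complex_of_real t * c) * T 0 f x"
  proof (rule right_deriv_linear_ode[OF _ _ t])
    fix s :: real assume s: "s \<ge> 0"
    have "AR_tendsto (\<lambda>r. T r f) (T s f) (at s within {0..})"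
      using T f s unfolding C0_semigroup_def by blast
    then show "((\<lambda>r. T r f x) \<longlongrightarrow> T s f x) (at s within {0..})"
      by (rule AR_tendsto_pointwise)
    have "AR_operator (T s)" using T s unfolding C0_semigroup_def by blast
    then have "T s (M f) x = c * T s f x" unfolding Mf using AR_operator_scale f by simp
    then show "((\<lambda>h. (T (s+h) f x - T s f x) / complex_of_real h) \<longlongrightarrow> c * T s f x) (at_right 0)"
      using C0_semigroup_orbit_right_derivative[OF T gen M f s, of x] by simp
  qed
  then show "T t f x = exp (complex_of_real t * c) * f x"
    using T f unfolding C0_semigroup_def by simp
qed

theorem mainTheorem2:
  fixes M :: "(real \<Rightarrow> complex) \<Rightarrow> (real \<Rightarrow> complex)"
    and m :: "nat \<Rightarrow> complex"
    and T :: "real \<Rightarrow> (real \<Rightarrow> complex) \<Rightarrow> (real \<Rightarrow> complex)"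
  assumes "is_multiplier M m"
    and "C0_semigroup T"
    and "generates M T"
  shows "\<forall>t\<ge>0. is_multiplier (T t) (\<lambda>n. exp (complex_of_real t * m n))"
proof (intro allI impI)
  fix t :: real assume t: "t \<ge> 0"
  have M: "AR_operator M" and monomials: "\<And>n. M (\<lambda>x. complex_of_real x ^ n) = (\<lambda>x. m n * complex_of_real x ^ n)"
    using assms(1) unfolding is_multiplier_def by auto
  have "AR_operator (T t)" using assms(2) t unfolding C0_semigroup_def by blast
  moreover have "T t (\<lambda>x. complex_of_real x ^ n) = (\<lambda>x. exp (complex_of_real t * m n) * complex_of_real x ^ n)" for n
    using C0_semigroup_eigenvector[OF assms(2,3) M AR_monomial monomials t] .
  ultimately show "is_multiplier (T t) (\<lambda>n. exp (complex_of_real t * m n))"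
    unfolding is_multiplier_def by blast
qed

end
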